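(* Let $\alpha_1,\mu_1\in\mathbb R$, $m\ge2$ an integer, and consider $$\partial_t u+u\,u_{xxx}+\alpha_1u_xu_{xx}+\frac{\mu_1}{m}(u^m)_x=0. \qquad(\ast)$$ Let $I=[a,b]$, $0<\alpha\le1$, and let $f\in L^\infty([0,\delta];\widetilde C^{3,\alpha}(I))$ be a solution of $(\ast)$ whose initial data $f_0$ is positive on $I\setminus\partial I$ and vanishes to order at least $3$ at each point of $\partial I$. Then: (1) for all $t\in[0,\delta]$, $f(t,\cdot)$ vanishes on $\partial I$ and $f(t,x)>0$ for $x\in I\setminus\partial I$; (2) the functions $t\mapsto\partial_x^kf(t,a)$, $k=0,1,2,3$, on $[0,\delta]$ are determined by the initial values $\partial_x^kf(0,a)$, $k=0,\dots,3$ (i.e. any two such solutions with the same values of $\partial_x^kf(0,a)$, $k\le3$, have the same $\partial_x^kf(t,a)$, $k\le 3$, for all $t\in[0,\delta]$). In particular, $$f(t,x)=(\beta(t)(x-a))^3+O\big(\|f\|_{L^\infty([0,\delta];C^{3,\alpha}(I))}|x-a|^{3+\alpha}\big)\quad\text{as }x\to a^+,$$ where the implicit constant in $O(\cdot)$ is universal and $\beta$ solves $\dot\beta(t)=-(2+6\alpha_1)\beta^4(t)$, $6\beta^3(0)=f_{0,xxx}(a)$. The analogous statements hold at the endpoint $b$.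
   Context: For a $C^{2,1}$ function $f$ on an interval $I$, $\|f\|_{Y(I)}=\|f^{-2/3}\partial_xf\|_{L^\infty(I)}^3+\|f^{-1/3}\partial_{xx}f\|_{L^\infty(I)}^{3/2}+\|f\|_{L^\infty(I)}+\|\partial_{xxx}f\|_{L^\infty(I)}$, and $\|f\|_{\widetilde C^{k,\alpha}(I)}=\|f\|_{C^{k,\alpha}(I)}+\|f\|_{Y(I)}$. For time-dependent $f$, $\|f\|_{L^\infty([0,\delta];\widetilde C^{k,\alpha}(I))}=\sup_{t\in[0,\delta]}\|f(t)\|_{\widetilde C^{k,\alpha}(I)}$, and $f$ belongs to this space if this is finite. *)

theory Defs
  imports "HOL-Analysis.Analysis"
begin

definition dx :: "real set \<Rightarrow> (real \<Rightarrow> real) \<Rightarrow> real \<Rightarrow> real" where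
  "dx I g = (\<lambda>x. vector_derivative g (at x within I))"

definition Dx :: "real set \<Rightarrow> nat \<Rightarrow> (real \<Rightarrow> real) \<Rightarrow> real \<Rightarrow> real" where
  "Dx I k g = (dx I ^^ k) g"

definition supn :: "real set \<Rightarrow> (real \<Rightarrow> real) \<Rightarrow> real" where
  "supn S h = Sup (insert 0 ((\<lambda>x. \<bar>h x\<bar>) ` S))"

definition holder_set :: "real \<Rightarrow> real set \<Rightarrow> (real \<Rightarrow> real) \<Rightarrow> real set" where
  "holder_set \<alpha> I h = {\<bar>h x - h y\<bar> / \<bar>x - y\<bar> powr \<alpha> | x y. x \<in> I \<and> y \<in> I \<and> x \<noteq> y}"

definition holder_semi :: "real \<Rightarrow> real set \<Rightarrow> (real \<Rightarrow> real) \<Rightarrow> real" where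
  "holder_semi \<alpha> I h = Sup (insert 0 (holder_set \<alpha> I h))"

definition in_C :: "nat \<Rightarrow> real \<Rightarrow> real set \<Rightarrow> (real \<Rightarrow> real) \<Rightarrow> bool" where
  "in_C k \<alpha> I g \<longleftrightarrow>
     (\<forall>j<k. \<forall>x\<in>I. (Dx I j g has_vector_derivative Dx I (Suc j) g x) (at x within I)) \<and>
     (\<forall>j\<le>k. bdd_above ((\<lambda>x. \<bar>Dx I j g x\<bar>) ` I)) \<and>
     bdd_above (holder_set \<alpha> I (Dx I k g))"

definition C_norm :: "nat \<Rightarrow> real \<Rightarrow> real set \<Rightarrow> (real \<Rightarrow> real) \<Rightarrow> real" where
  "C_norm k \<alpha> I g = (\<Sum>j\<le>k. supn I (Dx I j g)) + holder_semi \<alpha> I (Dx I k g)"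

(* The Y(I) quantities; the singular weights are evaluated where g does not vanish. *)
definition Y1 :: "real set \<Rightarrow> (real \<Rightarrow> real) \<Rightarrow> real \<Rightarrow> real" where
  "Y1 I g = (\<lambda>x. \<bar>g x\<bar> powr (-2/3) * Dx I 1 g x)"

definition Y2 :: "real set \<Rightarrow> (real \<Rightarrow> real) \<Rightarrow> real \<Rightarrow> real" where
  "Y2 I g = (\<lambda>x. \<bar>g x\<bar> powr (-1/3) * Dx I 2 g x)"

definition Y_norm :: "real set \<Rightarrow> (real \<Rightarrow> real) \<Rightarrow> real" where
  "Y_norm I g = supn {x\<in>I. g x \<noteq> 0} (Y1 I g) ^ 3
              + supn {x\<in>I. g x \<noteq> 0} (Y2 I g) powr (3/2)
              + supn I g + supn I (Dx I 3 g)"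

definition in_Y :: "real set \<Rightarrow> (real \<Rightarrow> real) \<Rightarrow> bool" where
  "in_Y I g \<longleftrightarrow> bdd_above ((\<lambda>x. \<bar>Y1 I g x\<bar>) ` {x\<in>I. g x \<noteq> 0}) \<and>
                 bdd_above ((\<lambda>x. \<bar>Y2 I g x\<bar>) ` {x\<in>I. g x \<noteq> 0}) \<and>
                 bdd_above ((\<lambda>x. \<bar>g x\<bar>) ` I) \<and> bdd_above ((\<lambda>x. \<bar>Dx I 3 g x\<bar>) ` I)"

definition in_Ct :: "nat \<Rightarrow> real \<Rightarrow> real set \<Rightarrow> (real \<Rightarrow> real) \<Rightarrow> bool" where
  "in_Ct k \<alpha> I g \<longleftrightarrow> in_C k \<alpha> I g \<and> in_Y I g"

definition Ct_norm :: "nat \<Rightarrow> real \<Rightarrow> real set \<Rightarrow> (real \<Rightarrow> real) \<Rightarrow> real" where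
  "Ct_norm k \<alpha> I g = C_norm k \<alpha> I g + Y_norm I g"

definition in_Linf_Ct :: "nat \<Rightarrow> real \<Rightarrow> real set \<Rightarrow> real \<Rightarrow> (real \<Rightarrow> real \<Rightarrow> real) \<Rightarrow> bool" where
  "in_Linf_Ct k \<alpha> I \<delta> f \<longleftrightarrow> (\<forall>t\<in>{0..\<delta>}. in_Ct k \<alpha> I (f t)) \<and>
      bdd_above ((\<lambda>t. Ct_norm k \<alpha> I (f t)) ` {0..\<delta>})"

definition Linf_C_norm :: "nat \<Rightarrow> real \<Rightarrow> real set \<Rightarrow> real \<Rightarrow> (real \<Rightarrow> real \<Rightarrow> real) \<Rightarrow> real" where
  "Linf_C_norm k \<alpha> I \<delta> f = (SUP t\<in>{0..\<delta>}. C_norm k \<alpha> I (f t))"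

(* Hypotheses of the lemma: f in L^infty([0,delta]; C~^{3,alpha}([a,b])) is a (classical,
  pointwise in x) solution of u_t + u u_xxx + alpha1 u_x u_xx + (mu1/m)(u^m)_x = 0,
  with initial datum positive in the interior and vanishing to order >= 3 at a and b. *)
definition is_sol :: "real \<Rightarrow> real \<Rightarrow> nat \<Rightarrow> real \<Rightarrow> real \<Rightarrow> real \<Rightarrow> real \<Rightarrow> (real \<Rightarrow> real \<Rightarrow> real) \<Rightarrow> bool" where
  "is_sol \<alpha>1 \<mu>1 m a b \<alpha> \<delta> f \<longleftrightarrow>
     a < b \<and> 0 < \<alpha> \<and> \<alpha> \<le> 1 \<and> 0 < \<delta> \<and> 2 \<le> m \<and>
     in_Linf_Ct 3 \<alpha> {a..b} \<delta> f \<and>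
     (\<forall>t\<in>{0..\<delta>}. \<forall>x\<in>{a..b}.
        ((\<lambda>s. f s x) has_real_derivative
           - (f t x * Dx {a..b} 3 (f t) x + \<alpha>1 * Dx {a..b} 1 (f t) x * Dx {a..b} 2 (f t) x
              + (\<mu>1 / real m) * Dx {a..b} 1 (\<lambda>y. f t y ^ m) x)) (at t within {0..\<delta>})) \<and>
     (\<forall>x\<in>{a<..<b}. 0 < f 0 x) \<and>
     (\<forall>j<3. Dx {a..b} j (f 0) a = 0 \<and> Dx {a..b} j (f 0) b = 0)"

end

theory Submission
  imports Defs
begin

text \<open>
  At a fixed point \<open>x\<close> the equation reads
  \<open>\<partial>\<^sub>t f = - (f f\<^sub>x\<^sub>x\<^sub>x + \<alpha>\<^sub>1 f\<^sub>x f\<^sub>x\<^sub>x + \<mu>\<^sub>1 f\<^sup>m\<^sup>-\<^sup>1 f\<^sub>x)\<close>,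
  and the weights \<open>\<bar>f\<^sub>x\<bar> \<le> N \<bar>f\<bar>\<^sup>2\<^sup>/\<^sup>3\<close>, \<open>\<bar>f\<^sub>x\<^sub>x\<bar> \<le> N \<bar>f\<bar>\<^sup>1\<^sup>/\<^sup>3\<close> built into the
  \<open>Y\<close>-norm make the right-hand side \<open>O(\<bar>f\<bar>)\<close>. Gronwall's inequality therefore propagates
  zeros of \<open>f(\<cdot>, x)\<close> in time: \<open>f\<close> keeps vanishing at the endpoints and, by the intermediate
  value theorem, stays positive inside. The same weights force \<open>f\<^sub>x\<close> and \<open>f\<^sub>x\<^sub>x\<close> to vanish
  at an endpoint \<open>p\<close>, so Taylor's formula with the Hoelder bound on \<open>f\<^sub>x\<^sub>x\<^sub>x\<close> gives
  \<open>f(t, x) = h(t) (x - p)\<^sup>3 / 6 + O(\<bar>x - p\<bar>\<^sup>3\<^sup>+\<^sup>\<alpha>)\<close> with \<open>h(t) = f\<^sub>x\<^sub>x\<^sub>x(t, p)\<close>.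
  Dividing the equation by \<open>(x - p)\<^sup>3 / 6\<close> and letting \<open>x \<rightarrow> p\<close> (uniformly in time,
  time derivatives included) yields the Riccati equation \<open>h' = - (1 + 3 \<alpha>\<^sub>1) h\<^sup>2\<close>.
  Its solutions are determined by \<open>h(0)\<close>, and \<open>6 \<beta>\<^sup>3\<close> is one of them.
\<close>

section \<open>Calculus on real intervals\<close>

lemma mvt_within_superset:
  fixes u u' :: "real \<Rightarrow> real"
  assumes deriv: "\<And>s. s \<in> S \<Longrightarrow> (u has_real_derivative u' s) (at s within S)"
    and sub: "{t1..t2} \<subseteq> S" and lt: "t1 < t2"
  obtains \<xi> where "t1 < \<xi>" "\<xi> < t2" "u t2 - u t1 = u' \<xi> * (t2 - t1)"
proof -
  have "\<exists>\<xi>\<in>{t1<..<t2}. u t2 - u t1 = (\<lambda>h. u' \<xi> * h) (t2 - t1)"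
  proof (rule mvt_simple[OF lt])
    fix s assume "t1 \<le> s" "s \<le> t2"
    then have "(u has_real_derivative u' s) (at s within {t1..t2})"
      using deriv sub by (meson atLeastAtMost_iff has_field_derivative_subset subsetD)
    then show "(u has_derivative (\<lambda>h. u' s * h)) (at s within {t1..t2})"
      by (simp add: has_field_derivative_def)
  qed
  then show thesis using that by auto
qed

lemma nonincreasing_if_deriv_nonpos:
  fixes w w' :: "real \<Rightarrow> real"
  assumes deriv: "\<And>s. s \<in> S \<Longrightarrow> (w has_real_derivative w' s) (at s within S)"
    and nonpos: "\<And>s. s \<in> S \<Longrightarrow> w' s \<le> 0"
    and sub: "{t1..t2} \<subseteq> S" and le: "t1 \<le> t2"
  shows "w t2 \<le> w t1"
proof (cases "t1 = t2")
  case False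
  with le have "t1 < t2" by simp
  then obtain \<xi> where "t1 < \<xi>" "\<xi> < t2" "w t2 - w t1 = w' \<xi> * (t2 - t1)"
    using mvt_within_superset[OF deriv sub] by blast
  have "w' \<xi> \<le> 0"
    using \<open>t1 < \<xi>\<close> \<open>\<xi> < t2\<close> by (intro nonpos subsetD[OF sub]) simp
  with \<open>t1 < \<xi>\<close> \<open>\<xi> < t2\<close> have "w' \<xi> * (t2 - t1) \<le> 0"
    by (intro mult_nonpos_nonneg) auto
  with \<open>w t2 - w t1 = w' \<xi> * (t2 - t1)\<close> show ?thesis by linarith
qed simp

lemma gronwall_vanishing:
  fixes u u' :: "real \<Rightarrow> real"
  assumes deriv: "\<And>s. s \<in> {l..r} \<Longrightarrow> (u has_real_derivative u' s) (at s within {l..r})"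
    and bound: "\<And>s. s \<in> {l..r} \<Longrightarrow> \<bar>u' s\<bar> \<le> K * \<bar>u s\<bar>"
    and t0: "t0 \<in> {l..r}" and zero: "u t0 = 0" and t: "t \<in> {l..r}"
  shows "u t = 0"
proof -
  have uu': "\<bar>u s * u' s\<bar> \<le> K * (u s)\<^sup>2" if "s \<in> {l..r}" for s
    using mult_left_mono[OF bound[OF that], of "\<bar>u s\<bar>"]
    by (simp add: abs_mult power2_eq_square algebra_simps)
  have sub: "{t0..t} \<subseteq> {l..r}" "{t..t0} \<subseteq> {l..r}" using t0 t by auto
  consider "t0 \<le> t" | "t \<le> t0" by linarith
  then have "(u t)\<^sup>2 \<le> 0"
  proof cases
    case 1
    have "(u t)\<^sup>2 * exp (- 2 * K * t) \<le> (u t0)\<^sup>2 * exp (- 2 * K * t0)"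
    proof (rule nonincreasing_if_deriv_nonpos[OF _ _ sub(1) 1])
      fix s assume s: "s \<in> {l..r}"
      show "((\<lambda>s. (u s)\<^sup>2 * exp (- 2 * K * s)) has_real_derivative
          2 * exp (- 2 * K * s) * (u s * u' s - K * (u s)\<^sup>2)) (at s within {l..r})"
        using deriv[OF s] by (auto intro!: derivative_eq_intros simp: algebra_simps)
      show "2 * exp (- 2 * K * s) * (u s * u' s - K * (u s)\<^sup>2) \<le> 0"
        using uu'[OF s] by (intro mult_nonneg_nonpos) auto
    qed
    then show ?thesis using zero by (simp add: mult_le_0_iff)
  next
    case 2
    have "- ((u t0)\<^sup>2 * exp (2 * K * t0)) \<le> - ((u t)\<^sup>2 * exp (2 * K * t))"
    proof (rule nonincreasing_if_deriv_nonpos[OF _ _ sub(2) 2])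
      fix s assume s: "s \<in> {l..r}"
      show "((\<lambda>s. - ((u s)\<^sup>2 * exp (2 * K * s))) has_real_derivative
          - (2 * exp (2 * K * s) * (u s * u' s + K * (u s)\<^sup>2))) (at s within {l..r})"
        using deriv[OF s] by (auto intro!: derivative_eq_intros simp: algebra_simps)
      show "- (2 * exp (2 * K * s) * (u s * u' s + K * (u s)\<^sup>2)) \<le> 0"
        using uu'[OF s] by (simp add: abs_le_iff)
    qed
    then show ?thesis using zero by (simp add: mult_le_0_iff)
  qed
  then show ?thesis by simp
qed

lemma riccati_unique:
  fixes h1 h2 :: "real \<Rightarrow> real"
  assumes d1: "\<And>t. t \<in> {l..r} \<Longrightarrow> (h1 has_real_derivative - c * (h1 t)\<^sup>2) (at t within {l..r})"
    and d2: "\<And>t. t \<in> {l..r} \<Longrightarrow> (h2 has_real_derivative - c * (h2 t)\<^sup>2) (at t within {l..r})"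
    and t0: "t0 \<in> {l..r}" and init: "h1 t0 = h2 t0" and t: "t \<in> {l..r}"
  shows "h1 t = h2 t"
proof -
  obtain B1 where B1: "\<And>t. t \<in> {l..r} \<Longrightarrow> \<bar>h1 t\<bar> \<le> B1"
    using continuous_on_compact_bound[OF compact_Icc DERIV_continuous_on[OF d1]] by auto
  obtain B2 where B2: "\<And>t. t \<in> {l..r} \<Longrightarrow> \<bar>h2 t\<bar> \<le> B2"
    using continuous_on_compact_bound[OF compact_Icc DERIV_continuous_on[OF d2]] by auto
  have "h1 t - h2 t = 0"
  proof (rule gronwall_vanishing[where u'="\<lambda>s. - c * (h1 s + h2 s) * (h1 s - h2 s)", OF _ _ t0 _ t])
    fix s assume s: "s \<in> {l..r}"
    have "- c * (h1 s)\<^sup>2 - - c * (h2 s)\<^sup>2 = - c * (h1 s + h2 s) * (h1 s - h2 s)"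
      by (simp add: algebra_simps power2_eq_square)
    then show "((\<lambda>s. h1 s - h2 s) has_real_derivative - c * (h1 s + h2 s) * (h1 s - h2 s)) (at s within {l..r})"
      using DERIV_diff[OF d1[OF s] d2[OF s]] by simp
    have "\<bar>h1 s + h2 s\<bar> \<le> B1 + B2" using B1[OF s] B2[OF s] by linarith
    then show "\<bar>- c * (h1 s + h2 s) * (h1 s - h2 s)\<bar> \<le> \<bar>c\<bar> * (B1 + B2) * \<bar>h1 s - h2 s\<bar>"
      by (simp add: abs_mult mult_left_mono mult_right_mono)
  qed (use init in simp)
  then show ?thesis by simp
qed

lemma abs_le_of_deriv_power_bound:
  fixes v v' \<phi> :: "real \<Rightarrow> real"
  assumes deriv: "\<And>s. s \<in> {a..b} \<Longrightarrow> (v has_real_derivative v' s) (at s within {a..b})"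
    and x: "x \<in> {a..b}" and p: "p \<in> {a..b}" and zero: "v p = 0"
    and mono: "mono_on {0..} \<phi>" and nonneg: "\<And>r. 0 \<le> r \<Longrightarrow> 0 \<le> \<phi> r"
    and bound: "\<And>y. y \<in> {a..b} \<Longrightarrow> y \<noteq> p \<Longrightarrow> \<bar>v' y\<bar> \<le> \<phi> \<bar>y - p\<bar> * \<bar>y - p\<bar> ^ k"
  shows "\<bar>v x\<bar> \<le> \<phi> \<bar>x - p\<bar> * \<bar>x - p\<bar> ^ Suc k"
proof -
  have closer: "\<bar>v' y\<bar> \<le> \<phi> \<bar>x - p\<bar> * \<bar>x - p\<bar> ^ k"
    if "y \<in> {a..b}" "y \<noteq> p" "\<bar>y - p\<bar> \<le> \<bar>x - p\<bar>" for y
  proof -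
    have "\<phi> \<bar>y - p\<bar> * \<bar>y - p\<bar> ^ k \<le> \<phi> \<bar>x - p\<bar> * \<bar>x - p\<bar> ^ k"
      using mono_onD[OF mono, of "\<bar>y - p\<bar>" "\<bar>x - p\<bar>"] that(3) nonneg
      by (intro mult_mono power_mono) auto
    with bound[OF that(1,2)] show ?thesis by linarith
  qed
  consider "x = p" | "x < p" | "p < x" by linarith
  then show ?thesis
  proof cases
    case 2
    then obtain \<xi> where "x < \<xi>" "\<xi> < p" "v p - v x = v' \<xi> * (p - x)"
      using mvt_within_superset[OF deriv, of x p] x p by auto
    then have "v x = - (v' \<xi> * (p - x))" using zero by simp
    then have "\<bar>v x\<bar> = \<bar>v' \<xi> * (p - x)\<bar>" by simp
    also have "\<dots> = \<bar>v' \<xi>\<bar> * \<bar>x - p\<bar>" by (simp add: abs_mult abs_minus_commute)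
    also have "\<dots> \<le> \<phi> \<bar>x - p\<bar> * \<bar>x - p\<bar> ^ k * \<bar>x - p\<bar>"
      using closer[of \<xi>] x p \<open>x < \<xi>\<close> \<open>\<xi> < p\<close> by (intro mult_right_mono) auto
    finally show ?thesis by (simp only: power_Suc2 mult.assoc)
  next
    case 3
    then obtain \<xi> where "p < \<xi>" "\<xi> < x" "v x - v p = v' \<xi> * (x - p)"
      using mvt_within_superset[OF deriv, of p x] x p by auto
    then have "\<bar>v x\<bar> = \<bar>v' \<xi>\<bar> * \<bar>x - p\<bar>" using zero by (simp add: abs_mult)
    also have "\<dots> \<le> \<phi> \<bar>x - p\<bar> * \<bar>x - p\<bar> ^ k * \<bar>x - p\<bar>"
      using closer[of \<xi>] x p \<open>p < \<xi>\<close> \<open>\<xi> < x\<close> by (intro mult_right_mono) auto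
    finally show ?thesis by (simp only: power_Suc2 mult.assoc)
  qed (use zero in simp)
qed

lemma taylor3_remainder_bound:
  fixes g0 g1 g2 g3 \<phi> :: "real \<Rightarrow> real"
  assumes d0: "\<And>s. s \<in> {a..b} \<Longrightarrow> (g0 has_real_derivative g1 s) (at s within {a..b})"
    and d1: "\<And>s. s \<in> {a..b} \<Longrightarrow> (g1 has_real_derivative g2 s) (at s within {a..b})"
    and d2: "\<And>s. s \<in> {a..b} \<Longrightarrow> (g2 has_real_derivative g3 s) (at s within {a..b})"
    and p: "p \<in> {a..b}" and z0: "g0 p = 0" and z1: "g1 p = 0" and z2: "g2 p = 0"
    and mono: "mono_on {0..} \<phi>" and nonneg: "\<And>r. 0 \<le> r \<Longrightarrow> 0 \<le> \<phi> r"
    and rem: "\<And>y. y \<in> {a..b} \<Longrightarrow> y \<noteq> p \<Longrightarrow> \<bar>g3 y - c\<bar> \<le> \<phi> \<bar>y - p\<bar>"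
    and x: "x \<in> {a..b}"
  shows "\<bar>g2 x - c * (x - p)\<bar> \<le> \<phi> \<bar>x - p\<bar> * \<bar>x - p\<bar>"
    and "\<bar>g1 x - c * (x - p)\<^sup>2 / 2\<bar> \<le> \<phi> \<bar>x - p\<bar> * \<bar>x - p\<bar>\<^sup>2"
    and "\<bar>g0 x - c * (x - p) ^ 3 / 6\<bar> \<le> \<phi> \<bar>x - p\<bar> * \<bar>x - p\<bar> ^ 3"
proof -
  have r2: "\<bar>g2 y - c * (y - p)\<bar> \<le> \<phi> \<bar>y - p\<bar> * \<bar>y - p\<bar> ^ Suc 0" if y: "y \<in> {a..b}" for y
  proof (rule abs_le_of_deriv_power_bound[OF _ y p _ mono nonneg])
    fix s assume "s \<in> {a..b}"
    then show "((\<lambda>y. g2 y - c * (y - p)) has_real_derivative g3 s - c) (at s within {a..b})"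
      using d2 by (auto intro!: derivative_eq_intros)
  qed (use z2 rem in auto)
  have r1: "\<bar>g1 y - c * (y - p)\<^sup>2 / 2\<bar> \<le> \<phi> \<bar>y - p\<bar> * \<bar>y - p\<bar> ^ Suc 1" if y: "y \<in> {a..b}" for y
  proof (rule abs_le_of_deriv_power_bound[OF _ y p _ mono nonneg])
    fix s assume "s \<in> {a..b}"
    then show "((\<lambda>y. g1 y - c * (y - p)\<^sup>2 / 2) has_real_derivative g2 s - c * (s - p)) (at s within {a..b})"
      using d1 by (auto intro!: derivative_eq_intros simp: power2_eq_square field_simps)
  qed (use z1 r2 in auto)
  have r0: "\<bar>g0 y - c * (y - p) ^ 3 / 6\<bar> \<le> \<phi> \<bar>y - p\<bar> * \<bar>y - p\<bar> ^ Suc 2" if y: "y \<in> {a..b}" for y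
  proof (rule abs_le_of_deriv_power_bound[OF _ y p _ mono nonneg])
    fix s assume "s \<in> {a..b}"
    then show "((\<lambda>y. g0 y - c * (y - p) ^ 3 / 6) has_real_derivative g1 s - c * (s - p)\<^sup>2 / 2)
        (at s within {a..b})"
      using d0 by (auto intro!: derivative_eq_intros)
  qed (use z0 r1 in \<open>auto simp: power2_eq_square\<close>)
  show "\<bar>g2 x - c * (x - p)\<bar> \<le> \<phi> \<bar>x - p\<bar> * \<bar>x - p\<bar>" using r2[OF x] by simp
  show "\<bar>g1 x - c * (x - p)\<^sup>2 / 2\<bar> \<le> \<phi> \<bar>x - p\<bar> * \<bar>x - p\<bar>\<^sup>2"
    using r1[OF x] by (simp add: power2_eq_square)
  show "\<bar>g0 x - c * (x - p) ^ 3 / 6\<bar> \<le> \<phi> \<bar>x - p\<bar> * \<bar>x - p\<bar> ^ 3" using r0[OF x] by simp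
qed

lemma tendsto_eq_0_if_dominated_by_powr:
  fixes g u :: "'a \<Rightarrow> real"
  assumes F: "F \<noteq> bot" and g: "(g \<longlongrightarrow> c) F" and u: "(u \<longlongrightarrow> 0) F" and r: "0 < r"
    and dom: "\<forall>\<^sub>F y in F. \<bar>g y\<bar> \<le> B * \<bar>u y\<bar> powr r"
  shows "c = 0"
proof -
  have "((\<lambda>y. B * \<bar>u y\<bar> powr r) \<longlongrightarrow> B * 0) F"
    by (intro tendsto_intros tendsto_zero_powrI[where b=r]) (use u r tendsto_rabs_zero in auto)
  moreover have "((\<lambda>y. \<bar>g y\<bar>) \<longlongrightarrow> \<bar>c\<bar>) F" using g by (intro tendsto_intros)
  ultimately have "\<bar>c\<bar> \<le> B * 0" using tendsto_le[OF F] dom by blast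
  then show ?thesis by simp
qed

lemma has_real_derivative_uniform_limit:
  fixes q q' :: "nat \<Rightarrow> real \<Rightarrow> real"
  assumes S: "convex S" and s: "s \<in> S"
    and deriv: "\<And>n s. s \<in> S \<Longrightarrow> (q n has_real_derivative q' n s) (at s within S)"
    and unif: "\<And>n s. s \<in> S \<Longrightarrow> \<bar>q n s - h s\<bar> \<le> \<rho> n"
    and unif': "\<And>n s. s \<in> S \<Longrightarrow> \<bar>q' n s - h' s\<bar> \<le> \<rho> n" and \<rho>: "\<rho> \<longlonglongrightarrow> 0"
  shows "(h has_real_derivative h' s) (at s within S)"
proof -
  have lim: "(\<lambda>n. q n x) \<longlonglongrightarrow> h x" if "x \<in> S" for x
    using Lim_null_comparison[of "\<lambda>n. q n x - h x", OF _ \<rho>] unif[OF that]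
    by (auto intro: LIM_zero_cancel)
  have "\<exists>g. \<forall>x\<in>S. (\<lambda>n. q n x) \<longlonglongrightarrow> g x \<and> (g has_derivative (\<lambda>k. h' x * k)) (at x within S)"
  proof (rule has_derivative_sequence[of S q "\<lambda>n x k. q' n x * k" "\<lambda>x k. h' x * k" s "h s"])
    show "convex S" "s \<in> S" "(\<lambda>n. q n s) \<longlonglongrightarrow> h s" by (fact S s lim[OF s])+
  next
    fix n x assume "x \<in> S"
    then show "(q n has_derivative (\<lambda>k. q' n x * k)) (at x within S)"
      using deriv by (simp add: has_field_derivative_def)
  next
    fix e :: real assume "0 < e"
    with \<rho> have "\<forall>\<^sub>F n in sequentially. \<rho> n < e" by (rule order_tendstoD(2))
    then show "\<forall>\<^sub>F n in sequentially. \<forall>x\<in>S. \<forall>k. norm (q' n x * k - h' x * k) \<le> e * norm k"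
    proof eventually_elim
      case (elim n)
      show ?case
      proof (intro ballI allI)
        fix x k assume "x \<in> S"
        have "norm (q' n x * k - h' x * k) = \<bar>q' n x - h' x\<bar> * \<bar>k\<bar>"
          by (simp add: abs_mult left_diff_distrib[symmetric])
        also have "\<dots> \<le> e * norm k"
          using unif'[OF \<open>x \<in> S\<close>, of n] elim by (simp add: mult_right_mono)
        finally show "norm (q' n x * k - h' x * k) \<le> e * norm k" .
      qed
    qed
  qed
  then obtain g where g: "\<And>x. x \<in> S \<Longrightarrow> (\<lambda>n. q n x) \<longlonglongrightarrow> g x"
    and dg: "(g has_derivative (\<lambda>k. h' s * k)) (at s within S)"
    using s by blast
  have "\<And>x. x \<in> S \<Longrightarrow> h x = g x" using LIMSEQ_unique[OF lim g] by blast
  from has_derivative_transform[OF s this dg] show ?thesis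
    by (simp add: has_field_derivative_def)
qed

lemma power2_le_powr_mult_powr:
  fixes y D \<alpha> :: real
  assumes "0 \<le> y" "y \<le> D" "\<alpha> \<le> 2"
  shows "y\<^sup>2 \<le> D powr (2 - \<alpha>) * y powr \<alpha>"
proof (cases "y = 0")
  case False
  with assms have "y\<^sup>2 = y powr ((2 - \<alpha>) + \<alpha>)" by (simp add: powr_numeral)
  also have "\<dots> = y powr (2 - \<alpha>) * y powr \<alpha>" by (rule powr_add)
  also have "\<dots> \<le> D powr (2 - \<alpha>) * y powr \<alpha>"
    using assms by (intro mult_right_mono powr_mono2) auto
  finally show ?thesis .
qed simp

lemma abs_mult_diff_le:
  fixes A B a b :: real
  shows "\<bar>A * B - a * b\<bar> \<le> \<bar>a\<bar> * \<bar>B - b\<bar> + \<bar>A - a\<bar> * \<bar>B\<bar>"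
proof -
  have "A * B - a * b = a * (B - b) + (A - a) * B" by (simp add: algebra_simps)
  then have "\<bar>A * B - a * b\<bar> \<le> \<bar>a * (B - b)\<bar> + \<bar>(A - a) * B\<bar>" by (simp add: abs_triangle_ineq)
  then show ?thesis by (simp add: abs_mult)
qed

lemma endpoint_approximation:
  fixes a b p :: real
  assumes "a < b" "p \<in> {a, b}"
  obtains x :: "nat \<Rightarrow> real" where "\<And>n. x n \<in> {a..b}" "\<And>n. \<bar>x n - p\<bar> = (b - a) / Suc n"
proof -
  define d where "d n = (b - a) / Suc n" for n
  show thesis
  proof (rule that[of "\<lambda>n. if p = a then a + d n else b - d n"])
    fix n
    have "0 < d n" "d n \<le> b - a"
      using assms(1) by (auto simp: d_def field_simps intro: mult_right_mono)
    with assms have "(if p = a then a + d n else b - d n) \<in> {a..b}"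
      and "\<bar>(if p = a then a + d n else b - d n) - p\<bar> = d n" by auto
    then show "(if p = a then a + d n else b - d n) \<in> {a..b}"
      and "\<bar>(if p = a then a + d n else b - d n) - p\<bar> = (b - a) / Suc n"
      by (simp_all add: d_def)
  qed
qed

lemma abs_quotient_diff_le:
  fixes A B E Y :: real
  assumes "Y \<noteq> 0" "\<bar>A - B * Y / 6\<bar> \<le> E * \<bar>Y\<bar>"
  shows "\<bar>6 * A / Y - B\<bar> \<le> 6 * E"
proof -
  have "6 * A / Y - B = 6 * (A - B * Y / 6) / Y" using assms(1) by (simp add: field_simps)
  then have "\<bar>6 * A / Y - B\<bar> = 6 * \<bar>A - B * Y / 6\<bar> / \<bar>Y\<bar>" by (simp only: abs_divide abs_mult abs_numeral)
  also have "\<dots> \<le> 6 * (E * \<bar>Y\<bar>) / \<bar>Y\<bar>" using assms(2) by (intro divide_right_mono mult_left_mono) auto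
  also have "\<dots> = 6 * E" using assms(1) by simp
  finally show ?thesis .
qed

section \<open>Derivatives and norms on an interval\<close>

lemma Dx_0 [simp]: "Dx I 0 g = g"
  by (simp add: Dx_def)

lemma Dx_1_eq:
  assumes "a < b" "x \<in> {a..b}" "(g has_real_derivative g') (at x within {a..b})"
  shows "Dx {a..b} 1 g x = g'"
  using assms vector_derivative_within_closed_interval
  by (simp add: Dx_def dx_def has_real_derivative_iff_has_vector_derivative)

lemma supn_upper:
  assumes "bdd_above ((\<lambda>x. \<bar>h x\<bar>) ` S)" "x \<in> S"
  shows "\<bar>h x\<bar> \<le> supn S h"
  unfolding supn_def using assms by (intro cSup_upper) auto

lemma supn_nonneg:
  assumes "bdd_above ((\<lambda>x. \<bar>h x\<bar>) ` S)"
  shows "0 \<le> supn S h"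
  unfolding supn_def using assms by (intro cSup_upper) auto

lemma holder_semi_nonneg:
  assumes "bdd_above (holder_set \<alpha> I h)"
  shows "0 \<le> holder_semi \<alpha> I h"
  unfolding holder_semi_def using assms by (intro cSup_upper) auto

lemma holder_semi_bound:
  assumes bdd: "bdd_above (holder_set \<alpha> I h)" and x: "x \<in> I" and y: "y \<in> I"
  shows "\<bar>h x - h y\<bar> \<le> holder_semi \<alpha> I h * \<bar>x - y\<bar> powr \<alpha>"
proof (cases "x = y")
  case False
  have "\<bar>h x - h y\<bar> / \<bar>x - y\<bar> powr \<alpha> \<in> holder_set \<alpha> I h"
    unfolding holder_set_def using x y False by blast
  then have "\<bar>h x - h y\<bar> / \<bar>x - y\<bar> powr \<alpha> \<le> holder_semi \<alpha> I h"
    unfolding holder_semi_def using bdd by (intro cSup_upper) auto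
  then show ?thesis using False by (simp add: divide_le_eq)
qed simp

lemma in_C_deriv:
  assumes "in_C k \<alpha> I g" "j < k" "x \<in> I"
  shows "(Dx I j g has_real_derivative Dx I (Suc j) g x) (at x within I)"
  using assms by (simp add: in_C_def has_real_derivative_iff_has_vector_derivative)

lemma C_norm_nonneg:
  assumes "in_C k \<alpha> I g"
  shows "0 \<le> C_norm k \<alpha> I g"
  using assms unfolding in_C_def C_norm_def
  by (intro add_nonneg_nonneg sum_nonneg supn_nonneg holder_semi_nonneg) auto

lemma abs_Dx_le_C_norm:
  assumes C: "in_C k \<alpha> I g" and j: "j \<le> k" and x: "x \<in> I"
  shows "\<bar>Dx I j g x\<bar> \<le> C_norm k \<alpha> I g"
proof -
  have bdd: "bdd_above ((\<lambda>x. \<bar>Dx I i g x\<bar>) ` I)" if "i \<le> k" for i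
    using C that by (simp add: in_C_def)
  have "\<bar>Dx I j g x\<bar> \<le> supn I (Dx I j g)" by (rule supn_upper[OF bdd[OF j] x])
  also have "\<dots> \<le> (\<Sum>i\<le>k. supn I (Dx I i g))"
    using j by (intro member_le_sum supn_nonneg bdd) auto
  also have "\<dots> \<le> C_norm k \<alpha> I g"
    using C unfolding C_norm_def in_C_def by (simp add: holder_semi_nonneg)
  finally show ?thesis .
qed

lemma holder_le_C_norm:
  assumes C: "in_C k \<alpha> I g" and "x \<in> I" "y \<in> I"
  shows "\<bar>Dx I k g x - Dx I k g y\<bar> \<le> C_norm k \<alpha> I g * \<bar>x - y\<bar> powr \<alpha>"
proof -
  have bdd: "bdd_above (holder_set \<alpha> I (Dx I k g))" using C by (simp add: in_C_def)
  have "0 \<le> (\<Sum>j\<le>k. supn I (Dx I j g))"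
    using C by (intro sum_nonneg supn_nonneg) (simp add: in_C_def)
  then have "holder_semi \<alpha> I (Dx I k g) \<le> C_norm k \<alpha> I g" by (simp add: C_norm_def)
  then show ?thesis
    using holder_semi_bound[OF bdd assms(2,3)] by (meson mult_right_mono order_trans powr_ge_zero)
qed

lemma Y_norm_nonneg:
  assumes "in_Y I g"
  shows "0 \<le> Y_norm I g"
  using assms unfolding in_Y_def Y_norm_def by (simp add: supn_nonneg)

lemma Dx12_le_Y_norm:
  assumes Y: "in_Y I g" and x: "x \<in> I" and nz: "g x \<noteq> 0"
  shows "\<bar>Dx I 1 g x\<bar> \<le> max 1 (Y_norm I g) * \<bar>g x\<bar> powr (2/3)"
    and "\<bar>Dx I 2 g x\<bar> \<le> max 1 (Y_norm I g) * \<bar>g x\<bar> powr (1/3)"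
proof -
  let ?S = "{x \<in> I. g x \<noteq> 0}"
  define s1 where "s1 = supn ?S (Y1 I g)"
  define s2 where "s2 = supn ?S (Y2 I g)"
  have bdd: "bdd_above ((\<lambda>x. \<bar>Y1 I g x\<bar>) ` ?S)" "bdd_above ((\<lambda>x. \<bar>Y2 I g x\<bar>) ` ?S)"
    "bdd_above ((\<lambda>x. \<bar>g x\<bar>) ` I)" "bdd_above ((\<lambda>x. \<bar>Dx I 3 g x\<bar>) ` I)"
    using Y by (auto simp: in_Y_def)
  have nonneg: "0 \<le> s1" "0 \<le> s2" "0 \<le> supn I g" "0 \<le> supn I (Dx I 3 g)"
    unfolding s1_def s2_def using bdd by (auto intro: supn_nonneg)
  have Y_norm: "Y_norm I g = s1 ^ 3 + s2 powr (3/2) + supn I g + supn I (Dx I 3 g)"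
    unfolding Y_norm_def s1_def s2_def ..
  have "s1 \<le> max 1 (s1 ^ 3)" using self_le_power[of s1 3] by (cases "s1 \<le> 1") auto
  also have "\<dots> \<le> max 1 (Y_norm I g)"
    unfolding Y_norm using nonneg by (intro max.mono) auto
  finally have s1_le: "s1 \<le> max 1 (Y_norm I g)" .
  have "s2 \<le> max 1 (s2 powr (3/2))"
    using powr_mono[of 1 "3/2" s2] by (cases "s2 \<le> 1") auto
  also have "\<dots> \<le> max 1 (Y_norm I g)"
    unfolding Y_norm using nonneg by (intro max.mono) auto
  finally have s2_le: "s2 \<le> max 1 (Y_norm I g)" .
  have "\<bar>g x\<bar> powr (2/3) * \<bar>g x\<bar> powr (-2/3) = 1" "\<bar>g x\<bar> powr (1/3) * \<bar>g x\<bar> powr (-1/3) = 1"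
    using nz by (simp_all flip: powr_add)
  then have "Dx I 1 g x = Y1 I g x * \<bar>g x\<bar> powr (2/3)" "Dx I 2 g x = Y2 I g x * \<bar>g x\<bar> powr (1/3)"
    unfolding Y1_def Y2_def by (metis mult.commute mult.left_commute mult_1_right)+
  moreover have "\<bar>Y1 I g x\<bar> \<le> max 1 (Y_norm I g)" "\<bar>Y2 I g x\<bar> \<le> max 1 (Y_norm I g)"
    using supn_upper[OF bdd(1), of x] supn_upper[OF bdd(2), of x] x nz s1_le s2_le
    unfolding s1_def s2_def by auto
  ultimately show "\<bar>Dx I 1 g x\<bar> \<le> max 1 (Y_norm I g) * \<bar>g x\<bar> powr (2/3)"
    and "\<bar>Dx I 2 g x\<bar> \<le> max 1 (Y_norm I g) * \<bar>g x\<bar> powr (1/3)"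
    by (simp_all add: abs_mult mult_right_mono)
qed

section \<open>A fixed solution\<close>

context
  fixes \<alpha>1 \<mu>1 :: real and m :: nat and a b \<alpha> \<delta> :: real and f :: "real \<Rightarrow> real \<Rightarrow> real"
  assumes sol: "is_sol \<alpha>1 \<mu>1 m a b \<alpha> \<delta> f"
begin

abbreviation (input) D :: "nat \<Rightarrow> real \<Rightarrow> real \<Rightarrow> real" where
  "D k t \<equiv> Dx {a..b} k (f t)"

abbreviation (input) L :: real where
  "L \<equiv> Linf_C_norm 3 \<alpha> {a..b} \<delta> f"

definition Ct_bound :: real where
  "Ct_bound = max 1 (SUP t\<in>{0..\<delta>}. Ct_norm 3 \<alpha> {a..b} (f t))"

lemma Ct_bound_ge_1: "1 \<le> Ct_bound"
  by (simp add: Ct_bound_def)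

definition pde_rhs :: "real \<Rightarrow> real \<Rightarrow> real" where
  "pde_rhs t x = - (f t x * D 3 t x + \<alpha>1 * D 1 t x * D 2 t x + \<mu>1 * f t x ^ (m - 1) * D 1 t x)"

lemma sol_params: "a < b" "0 < \<alpha>" "\<alpha> \<le> 1" "0 < \<delta>" "2 \<le> m"
  using sol by (auto simp: is_sol_def)

lemma in_Ct_slice: "t \<in> {0..\<delta>} \<Longrightarrow> in_Ct 3 \<alpha> {a..b} (f t)"
  using sol by (simp add: is_sol_def in_Linf_Ct_def)

lemma C_norm_le_Ct_norm: "t \<in> {0..\<delta>} \<Longrightarrow> C_norm 3 \<alpha> {a..b} (f t) \<le> Ct_norm 3 \<alpha> {a..b} (f t)"
  using Y_norm_nonneg in_Ct_slice by (simp add: Ct_norm_def in_Ct_def)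

lemma bdd_Ct_norm: "bdd_above ((\<lambda>t. Ct_norm 3 \<alpha> {a..b} (f t)) ` {0..\<delta>})"
  using sol by (simp add: is_sol_def in_Linf_Ct_def)

lemma Ct_norm_le_Ct_bound: "t \<in> {0..\<delta>} \<Longrightarrow> Ct_norm 3 \<alpha> {a..b} (f t) \<le> Ct_bound"
  using cSUP_upper[OF _ bdd_Ct_norm] by (simp add: Ct_bound_def max.coboundedI2)

lemma C_norm_le_Linf_C_norm:
  assumes t: "t \<in> {0..\<delta>}"
  shows "C_norm 3 \<alpha> {a..b} (f t) \<le> L"
proof -
  obtain B where "\<forall>x \<in> (\<lambda>t. Ct_norm 3 \<alpha> {a..b} (f t)) ` {0..\<delta>}. x \<le> B"
    using bdd_Ct_norm unfolding bdd_above_def by blast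
  then have "bdd_above ((\<lambda>t. C_norm 3 \<alpha> {a..b} (f t)) ` {0..\<delta>})"
    using C_norm_le_Ct_norm by (intro bdd_aboveI2[where M=B]) force
  with t show ?thesis unfolding Linf_C_norm_def by (rule cSUP_upper)
qed

lemma Linf_C_norm_nonneg: "0 \<le> L"
  using C_norm_nonneg[of 3 \<alpha> "{a..b}" "f 0"] C_norm_le_Linf_C_norm[of 0] in_Ct_slice[of 0] sol_params
  by (simp add: in_Ct_def)

lemma Linf_C_norm_le_Ct_bound: "L \<le> Ct_bound"
  unfolding Linf_C_norm_def using sol_params
  by (intro cSUP_least) (auto intro: order_trans[OF C_norm_le_Ct_norm Ct_norm_le_Ct_bound])

lemma abs_D_le_Ct_bound: "t \<in> {0..\<delta>} \<Longrightarrow> j \<le> 3 \<Longrightarrow> x \<in> {a..b} \<Longrightarrow> \<bar>D j t x\<bar> \<le> Ct_bound"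
  using abs_Dx_le_C_norm[of 3 \<alpha> "{a..b}" "f t" j x] in_Ct_slice[of t] C_norm_le_Linf_C_norm[of t] Linf_C_norm_le_Ct_bound
  by (simp add: in_Ct_def)

lemma D3_holder: "t \<in> {0..\<delta>} \<Longrightarrow> x \<in> {a..b} \<Longrightarrow> y \<in> {a..b} \<Longrightarrow>
    \<bar>D 3 t x - D 3 t y\<bar> \<le> L * \<bar>x - y\<bar> powr \<alpha>"
  using holder_le_C_norm[of 3 \<alpha> "{a..b}" "f t" x y] in_Ct_slice[of t] C_norm_le_Linf_C_norm[of t]
  by (simp add: in_Ct_def) (meson mult_right_mono order_trans powr_ge_zero)

lemma D12_le_Ct_bound:
  assumes t: "t \<in> {0..\<delta>}" and x: "x \<in> {a..b}" and nz: "f t x \<noteq> 0"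
  shows "\<bar>D 1 t x\<bar> \<le> Ct_bound * \<bar>f t x\<bar> powr (2/3)" and "\<bar>D 2 t x\<bar> \<le> Ct_bound * \<bar>f t x\<bar> powr (1/3)"
proof -
  have Y: "in_Y {a..b} (f t)" and C: "in_C 3 \<alpha> {a..b} (f t)"
    using in_Ct_slice[OF t] by (auto simp: in_Ct_def)
  have "Y_norm {a..b} (f t) \<le> Ct_norm 3 \<alpha> {a..b} (f t)"
    using C_norm_nonneg[OF C] by (simp add: Ct_norm_def)
  then have "max 1 (Y_norm {a..b} (f t)) \<le> Ct_bound" using Ct_norm_le_Ct_bound[OF t] Ct_bound_ge_1 by simp
  then show "\<bar>D 1 t x\<bar> \<le> Ct_bound * \<bar>f t x\<bar> powr (2/3)" and "\<bar>D 2 t x\<bar> \<le> Ct_bound * \<bar>f t x\<bar> powr (1/3)"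
    using Dx12_le_Y_norm[OF Y x nz] by (meson mult_right_mono order_trans powr_ge_zero)+
qed

lemma D_deriv:
  assumes t: "t \<in> {0..\<delta>}" and x: "x \<in> {a..b}"
  shows "(f t has_real_derivative D 1 t x) (at x within {a..b})"
    and "(D 1 t has_real_derivative D 2 t x) (at x within {a..b})"
    and "(D 2 t has_real_derivative D 3 t x) (at x within {a..b})"
proof -
  have C: "in_C 3 \<alpha> {a..b} (f t)" using in_Ct_slice[OF t] by (simp add: in_Ct_def)
  show "(f t has_real_derivative D 1 t x) (at x within {a..b})"
    using in_C_deriv[OF C _ x, of 0] by simp
  show "(D 1 t has_real_derivative D 2 t x) (at x within {a..b})"
    using in_C_deriv[OF C _ x, of 1] by (simp add: numeral_2_eq_2)
  show "(D 2 t has_real_derivative D 3 t x) (at x within {a..b})"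
    using in_C_deriv[OF C _ x, of 2] by (simp add: numeral_3_eq_3)
qed

lemma time_deriv:
  assumes t: "t \<in> {0..\<delta>}" and x: "x \<in> {a..b}"
  shows "((\<lambda>s. f s x) has_real_derivative pde_rhs t x) (at t within {0..\<delta>})"
proof -
  have "((\<lambda>y. f t y ^ m) has_real_derivative real m * f t x ^ (m - 1) * D 1 t x) (at x within {a..b})"
    using D_deriv(1)[OF t x] by (auto intro!: derivative_eq_intros)
  then have "Dx {a..b} 1 (\<lambda>y. f t y ^ m) x = real m * f t x ^ (m - 1) * D 1 t x"
    by (rule Dx_1_eq[OF sol_params(1) x])
  then have "pde_rhs t x = - (f t x * D 3 t x + \<alpha>1 * D 1 t x * D 2 t x
      + (\<mu>1 / real m) * Dx {a..b} 1 (\<lambda>y. f t y ^ m) x)"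
    using sol_params(5) by (simp add: pde_rhs_def)
  then show ?thesis using sol t x unfolding is_sol_def by presburger
qed

lemma D1_zero_at_zero:
  assumes t: "t \<in> {0..\<delta>}" and x: "x \<in> {a..b}" and zero: "f t x = 0"
  shows "D 1 t x = 0"
proof (rule ccontr)
  assume nz: "D 1 t x \<noteq> 0"
  have F: "at x within {a..b} \<noteq> bot" using sol_params(1) x by (simp add: trivial_limit_within)
  have d: "(f t has_real_derivative D 1 t x) (at x within {a..b})" using D_deriv(1)[OF t x] .
  \<comment> \<open>a nonzero slope keeps \<open>f t\<close> away from \<open>0\<close> near \<open>x\<close>, where the \<open>Y\<close>-weight then applies\<close>
  then have "((\<lambda>y. (f t y - f t x) / (y - x)) \<longlongrightarrow> D 1 t x) (at x within {a..b})"
    by (simp add: has_field_derivative_iff)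
  then have "\<forall>\<^sub>F y in at x within {a..b}. (f t y - f t x) / (y - x) \<noteq> 0"
    using nz by (rule tendsto_imp_eventually_ne)
  moreover have "\<forall>\<^sub>F y in at x within {a..b}. y \<in> {a..b}" by (auto simp: eventually_at_filter)
  ultimately have "\<forall>\<^sub>F y in at x within {a..b}. \<bar>D 1 t y\<bar> \<le> Ct_bound * \<bar>f t y\<bar> powr (2/3)"
    by eventually_elim (use zero D12_le_Ct_bound(1)[OF t] in auto)
  moreover have "(D 1 t \<longlongrightarrow> D 1 t x) (at x within {a..b})"
    using DERIV_continuous[OF D_deriv(2)[OF t x]] by (simp add: continuous_within)
  moreover have "(f t \<longlongrightarrow> 0) (at x within {a..b})"
    using DERIV_continuous[OF d] zero by (simp add: continuous_within)
  ultimately have "D 1 t x = 0" by (intro tendsto_eq_0_if_dominated_by_powr[OF F]) auto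
  with nz show False ..
qed

lemma pde_rhs_bound: "\<exists>K. \<forall>t\<in>{0..\<delta>}. \<forall>x\<in>{a..b}. \<bar>pde_rhs t x\<bar> \<le> K * \<bar>f t x\<bar>"
proof (intro exI ballI)
  fix t x assume t: "t \<in> {0..\<delta>}" and x: "x \<in> {a..b}"
  let ?u = "f t x"
  have u: "\<bar>?u\<bar> \<le> Ct_bound" and d1: "\<bar>D 1 t x\<bar> \<le> Ct_bound" and d3: "\<bar>D 3 t x\<bar> \<le> Ct_bound"
    using abs_D_le_Ct_bound[OF t _ x, of 0] abs_D_le_Ct_bound[OF t _ x, of 1]
      abs_D_le_Ct_bound[OF t _ x, of 3]
    by simp_all
  have r3: "\<bar>?u * D 3 t x\<bar> \<le> Ct_bound * \<bar>?u\<bar>"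
    using d3 by (simp add: abs_mult mult.commute mult_left_mono)
  have r12: "\<bar>D 1 t x * D 2 t x\<bar> \<le> Ct_bound\<^sup>2 * \<bar>?u\<bar>"
  proof (cases "?u = 0")
    case False
    have "\<bar>D 1 t x * D 2 t x\<bar> \<le> (Ct_bound * \<bar>?u\<bar> powr (2/3)) * (Ct_bound * \<bar>?u\<bar> powr (1/3))"
      unfolding abs_mult using D12_le_Ct_bound[OF t x False] by (intro mult_mono) auto
    also have "\<dots> = Ct_bound\<^sup>2 * \<bar>?u\<bar>"
      using False by (simp add: power2_eq_square mult_ac flip: powr_add)
    finally show ?thesis .
  qed (use D1_zero_at_zero[OF t x] in auto)
  have rm: "\<bar>?u ^ (m - 1) * D 1 t x\<bar> \<le> Ct_bound ^ (m - 1) * \<bar>?u\<bar>"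
  proof -
    have m: "m - 1 = Suc (m - 2)" using sol_params(5) by simp
    have "\<bar>?u ^ (m - 1) * D 1 t x\<bar> = \<bar>?u\<bar> * (\<bar>?u\<bar> ^ (m - 2) * \<bar>D 1 t x\<bar>)"
      unfolding m by (simp add: abs_mult power_abs)
    also have "\<dots> \<le> \<bar>?u\<bar> * (Ct_bound ^ (m - 2) * Ct_bound)"
      using u d1 by (intro mult_left_mono mult_mono power_mono) auto
    finally show ?thesis unfolding m by (simp add: mult_ac)
  qed
  have "\<bar>pde_rhs t x\<bar>
      \<le> \<bar>?u * D 3 t x\<bar> + \<bar>\<alpha>1\<bar> * \<bar>D 1 t x * D 2 t x\<bar> + \<bar>\<mu>1\<bar> * \<bar>?u ^ (m - 1) * D 1 t x\<bar>"
    unfolding pde_rhs_def abs_minus_cancel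
    using abs_triangle_ineq[of "?u * D 3 t x + \<alpha>1 * D 1 t x * D 2 t x" "\<mu>1 * ?u ^ (m - 1) * D 1 t x"]
      abs_triangle_ineq[of "?u * D 3 t x" "\<alpha>1 * D 1 t x * D 2 t x"]
    by (simp add: abs_mult)
  also have "\<dots> \<le> Ct_bound * \<bar>?u\<bar> + \<bar>\<alpha>1\<bar> * (Ct_bound\<^sup>2 * \<bar>?u\<bar>) + \<bar>\<mu>1\<bar> * (Ct_bound ^ (m - 1) * \<bar>?u\<bar>)"
    by (intro add_mono mult_left_mono r3 r12 rm abs_ge_zero)
  finally show "\<bar>pde_rhs t x\<bar> \<le> (Ct_bound + \<bar>\<alpha>1\<bar> * Ct_bound\<^sup>2 + \<bar>\<mu>1\<bar> * Ct_bound ^ (m - 1)) * \<bar>f t x\<bar>"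
    by (simp add: algebra_simps)
qed

lemma vanishes_at_endpoint:
  assumes p: "p \<in> {a, b}" and t: "t \<in> {0..\<delta>}"
  shows "f t p = 0"
proof -
  obtain K where K: "\<And>s x. s \<in> {0..\<delta>} \<Longrightarrow> x \<in> {a..b} \<Longrightarrow> \<bar>pde_rhs s x\<bar> \<le> K * \<bar>f s x\<bar>"
    using pde_rhs_bound by blast
  have pI: "p \<in> {a..b}" using p sol_params(1) by auto
  have "\<forall>j<3. D j 0 p = 0" using sol p by (auto simp: is_sol_def)
  then have "D 0 0 p = 0" by (simp del: Dx_0)
  then show ?thesis
    using sol_params(4) t by (intro gronwall_vanishing[OF time_deriv[OF _ pI] K[OF _ pI], of 0 t]) simp_all
qed

lemma positive_inside:
  assumes t: "t \<in> {0..\<delta>}" and x: "x \<in> {a<..<b}"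
  shows "0 < f t x"
proof (rule ccontr)
  assume "\<not> 0 < f t x"
  have xI: "x \<in> {a..b}" using x by auto
  have f0: "0 < f 0 x" using sol x by (simp add: is_sol_def)
  have "continuous_on {0..t} (\<lambda>s. f s x)"
    using DERIV_continuous_on[OF time_deriv[OF _ xI]] t continuous_on_subset by fastforce
  then obtain s where s: "0 \<le> s" "s \<le> t" "f s x = 0"
    using IVT2'[of "\<lambda>s. f s x" t 0 0] \<open>\<not> 0 < f t x\<close> f0 t by auto
  obtain K where K: "\<And>s x. s \<in> {0..\<delta>} \<Longrightarrow> x \<in> {a..b} \<Longrightarrow> \<bar>pde_rhs s x\<bar> \<le> K * \<bar>f s x\<bar>"
    using pde_rhs_bound by blast
  have "f 0 x = 0"
    using s t sol_params(4) by (intro gronwall_vanishing[OF time_deriv[OF _ xI] K[OF _ xI], of s 0]) auto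
  with f0 show False by simp
qed

lemma D1_vanishes_at_endpoint: "p \<in> {a, b} \<Longrightarrow> t \<in> {0..\<delta>} \<Longrightarrow> D 1 t p = 0"
  using D1_zero_at_zero vanishes_at_endpoint sol_params(1) by auto

lemma D2_vanishes_at_endpoint:
  assumes p: "p \<in> {a, b}" and t: "t \<in> {0..\<delta>}"
  shows "D 2 t p = 0"
proof -
  have pI: "p \<in> {a..b}" using p sol_params(1) by auto
  have F: "at p within {a..b} \<noteq> bot" using sol_params(1) pI by (simp add: trivial_limit_within)
  have "\<forall>\<^sub>F y in at p within {a..b}. y \<in> {a<..<b}"
    unfolding eventually_at using sol_params(1) p
    by (rule_tac x="b - a" in exI) (auto simp: dist_real_def)
  then have "\<forall>\<^sub>F y in at p within {a..b}. \<bar>D 2 t y\<bar> \<le> Ct_bound * \<bar>f t y\<bar> powr (1/3)"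
  proof eventually_elim
    case (elim y)
    then show ?case using positive_inside[OF t elim] by (intro D12_le_Ct_bound(2)[OF t]) auto
  qed
  moreover have "(D 2 t \<longlongrightarrow> D 2 t p) (at p within {a..b})"
    using DERIV_continuous[OF D_deriv(3)[OF t pI]] by (simp add: continuous_within)
  moreover have "(f t \<longlongrightarrow> 0) (at p within {a..b})"
    using DERIV_continuous[OF D_deriv(1)[OF t pI]] vanishes_at_endpoint[OF p t]
    by (simp add: continuous_within)
  ultimately show ?thesis by (intro tendsto_eq_0_if_dominated_by_powr[OF F]) auto
qed

lemma endpoint_expansion:
  assumes p: "p \<in> {a, b}" and t: "t \<in> {0..\<delta>}" and x: "x \<in> {a..b}" and H: "L \<le> H"
  shows "\<bar>D 3 t x - D 3 t p\<bar> \<le> H * \<bar>x - p\<bar> powr \<alpha>"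
    and "\<bar>D 2 t x - D 3 t p * (x - p)\<bar> \<le> H * \<bar>x - p\<bar> powr \<alpha> * \<bar>x - p\<bar>"
    and "\<bar>D 1 t x - D 3 t p * (x - p)\<^sup>2 / 2\<bar> \<le> H * \<bar>x - p\<bar> powr \<alpha> * \<bar>x - p\<bar>\<^sup>2"
    and "\<bar>f t x - D 3 t p * (x - p) ^ 3 / 6\<bar> \<le> H * \<bar>x - p\<bar> powr \<alpha> * \<bar>x - p\<bar> ^ 3"
proof -
  have pI: "p \<in> {a..b}" using p sol_params(1) by auto
  have H0: "0 \<le> H" using Linf_C_norm_nonneg H by linarith
  have holder: "\<bar>D 3 t y - D 3 t p\<bar> \<le> H * \<bar>y - p\<bar> powr \<alpha>" if "y \<in> {a..b}" for y
    using D3_holder[OF t that pI] H by (meson mult_right_mono order_trans powr_ge_zero)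
  then show "\<bar>D 3 t x - D 3 t p\<bar> \<le> H * \<bar>x - p\<bar> powr \<alpha>" using x .
  have "mono_on {0..} (\<lambda>r. H * r powr \<alpha>)"
    using H0 sol_params(2) by (auto intro!: mono_onI mult_left_mono powr_mono2)
  from taylor3_remainder_bound[OF D_deriv[OF t] pI vanishes_at_endpoint[OF p t]
      D1_vanishes_at_endpoint[OF p t] D2_vanishes_at_endpoint[OF p t] this _ holder x]
  show "\<bar>D 2 t x - D 3 t p * (x - p)\<bar> \<le> H * \<bar>x - p\<bar> powr \<alpha> * \<bar>x - p\<bar>"
    and "\<bar>D 1 t x - D 3 t p * (x - p)\<^sup>2 / 2\<bar> \<le> H * \<bar>x - p\<bar> powr \<alpha> * \<bar>x - p\<bar>\<^sup>2"
    and "\<bar>f t x - D 3 t p * (x - p) ^ 3 / 6\<bar> \<le> H * \<bar>x - p\<bar> powr \<alpha> * \<bar>x - p\<bar> ^ 3"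
    using H0 by simp_all
qed

lemma endpoint_growth:
  assumes p: "p \<in> {a, b}" and t: "t \<in> {0..\<delta>}" and x: "x \<in> {a..b}"
  shows "\<bar>D 2 t x\<bar> \<le> Ct_bound * \<bar>x - p\<bar>" and "\<bar>D 1 t x\<bar> \<le> Ct_bound * \<bar>x - p\<bar>\<^sup>2"
    and "\<bar>f t x\<bar> \<le> Ct_bound * \<bar>x - p\<bar> ^ 3"
proof -
  have pI: "p \<in> {a..b}" using p sol_params(1) by auto
  have mono: "mono_on {0..} (\<lambda>_. Ct_bound)" by (simp add: mono_onI)
  have nonneg: "0 \<le> Ct_bound" if "0 \<le> r" for r :: real using Ct_bound_ge_1 by linarith
  have bound: "\<bar>D 3 t y - 0\<bar> \<le> Ct_bound" if "y \<in> {a..b}" "y \<noteq> p" for y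
    using abs_D_le_Ct_bound[OF t _ that(1)] by simp
  from taylor3_remainder_bound[OF D_deriv[OF t] pI vanishes_at_endpoint[OF p t]
      D1_vanishes_at_endpoint[OF p t] D2_vanishes_at_endpoint[OF p t] mono nonneg bound x]
  show "\<bar>D 2 t x\<bar> \<le> Ct_bound * \<bar>x - p\<bar>" and "\<bar>D 1 t x\<bar> \<le> Ct_bound * \<bar>x - p\<bar>\<^sup>2"
    and "\<bar>f t x\<bar> \<le> Ct_bound * \<bar>x - p\<bar> ^ 3"
    by simp_all
qed

lemma endpoint_nonlinear_term:
  assumes p: "p \<in> {a, b}" and t: "t \<in> {0..\<delta>}" and x: "x \<in> {a..b}"
  shows "\<bar>f t x ^ (m - 1) * D 1 t x\<bar>
    \<le> Ct_bound ^ m * (b - a) powr (2 - \<alpha>) * \<bar>x - p\<bar> powr \<alpha> * \<bar>x - p\<bar> ^ 3"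
proof -
  have pI: "p \<in> {a..b}" using p sol_params(1) by auto
  have bound0: "0 \<le> Ct_bound" using Ct_bound_ge_1 by linarith
  have m: "m - 1 = Suc (m - 2)" "m = Suc (Suc (m - 2))" using sol_params(5) by simp_all
  have "\<bar>f t x ^ (m - 1) * D 1 t x\<bar> = \<bar>f t x\<bar> ^ (m - 2) * \<bar>f t x\<bar> * \<bar>D 1 t x\<bar>"
    unfolding m(1) by (simp add: abs_mult power_abs mult_ac)
  also have "\<dots> \<le> Ct_bound ^ (m - 2) * (Ct_bound * \<bar>x - p\<bar> ^ 3) * (Ct_bound * \<bar>x - p\<bar>\<^sup>2)"
    using abs_D_le_Ct_bound[OF t _ x, of 0] endpoint_growth(2,3)[OF p t x] bound0
    by (intro mult_mono power_mono) simp_all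
  also have "\<dots> = Ct_bound ^ m * \<bar>x - p\<bar> ^ 3 * \<bar>x - p\<bar>\<^sup>2"
    by (subst (1 2) m(2)) (simp add: mult_ac)
  also have "\<dots> \<le> Ct_bound ^ m * \<bar>x - p\<bar> ^ 3 * ((b - a) powr (2 - \<alpha>) * \<bar>x - p\<bar> powr \<alpha>)"
    using x pI sol_params(3) bound0 by (intro mult_left_mono power2_le_powr_mult_powr) auto
  finally show ?thesis by (simp add: mult_ac)
qed

lemma endpoint_product_expansions:
  assumes p: "p \<in> {a, b}" and t: "t \<in> {0..\<delta>}" and x: "x \<in> {a..b}"
  defines "H \<equiv> D 3 t p" and "y \<equiv> x - p" and "r \<equiv> \<bar>x - p\<bar> powr \<alpha>"
  shows "\<bar>f t x * D 3 t x - (H * y ^ 3 / 6) * H\<bar> \<le> 2 * Ct_bound\<^sup>2 * r * \<bar>y\<bar> ^ 3"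
    and "\<bar>D 1 t x * D 2 t x - (H * y\<^sup>2 / 2) * (H * y)\<bar> \<le> 2 * Ct_bound\<^sup>2 * r * \<bar>y\<bar> ^ 3"
proof -
  have pI: "p \<in> {a..b}" using p sol_params(1) by auto
  have r0: "0 \<le> r" by (simp add: r_def)
  have bound0: "0 \<le> Ct_bound" using Ct_bound_ge_1 by linarith
  have e3: "\<bar>D 3 t x - H\<bar> \<le> Ct_bound * r" and e2: "\<bar>D 2 t x - H * y\<bar> \<le> Ct_bound * r * \<bar>y\<bar>"
    and e1: "\<bar>D 1 t x - H * y\<^sup>2 / 2\<bar> \<le> Ct_bound * r * \<bar>y\<bar>\<^sup>2"
    and e0: "\<bar>f t x - H * y ^ 3 / 6\<bar> \<le> Ct_bound * r * \<bar>y\<bar> ^ 3"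
    using endpoint_expansion[OF p t x Linf_C_norm_le_Ct_bound] unfolding y_def r_def H_def by simp_all
  have g2: "\<bar>D 2 t x\<bar> \<le> Ct_bound * \<bar>y\<bar>"
    using endpoint_growth(1)[OF p t x] unfolding y_def .
  have "\<bar>H\<bar> \<le> Ct_bound" and d3: "\<bar>D 3 t x\<bar> \<le> Ct_bound"
    using abs_D_le_Ct_bound[OF t _ pI] abs_D_le_Ct_bound[OF t _ x] by (simp_all add: H_def)
  then have Hy: "\<bar>H\<bar> * \<bar>y\<bar> ^ k \<le> Ct_bound * \<bar>y\<bar> ^ k" "0 \<le> \<bar>H\<bar> * \<bar>y\<bar> ^ k" for k
    by (simp_all add: mult_right_mono)
  have "\<bar>H * y\<^sup>2 / 2\<bar> = \<bar>H\<bar> * \<bar>y\<bar>\<^sup>2 / 2" "\<bar>H * y ^ 3 / 6\<bar> = \<bar>H\<bar> * \<bar>y\<bar> ^ 3 / 6"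
    by (simp_all add: abs_mult power_abs)
  with Hy[of 2] Hy[of 3] have H2: "\<bar>H * y\<^sup>2 / 2\<bar> \<le> Ct_bound * \<bar>y\<bar>\<^sup>2"
    and H3: "\<bar>H * y ^ 3 / 6\<bar> \<le> Ct_bound * \<bar>y\<bar> ^ 3"
    by linarith+
  have "\<bar>f t x * D 3 t x - (H * y ^ 3 / 6) * H\<bar>
      \<le> \<bar>H * y ^ 3 / 6\<bar> * \<bar>D 3 t x - H\<bar> + \<bar>f t x - H * y ^ 3 / 6\<bar> * \<bar>D 3 t x\<bar>"
    by (rule abs_mult_diff_le)
  also have "\<dots> \<le> (Ct_bound * \<bar>y\<bar> ^ 3) * (Ct_bound * r) + (Ct_bound * r * \<bar>y\<bar> ^ 3) * Ct_bound"
    by (intro add_mono mult_mono H3 e3 e0 d3) (simp_all add: r0 bound0)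
  finally show "\<bar>f t x * D 3 t x - (H * y ^ 3 / 6) * H\<bar> \<le> 2 * Ct_bound\<^sup>2 * r * \<bar>y\<bar> ^ 3"
    by (simp add: power2_eq_square algebra_simps)
  have "\<bar>D 1 t x * D 2 t x - (H * y\<^sup>2 / 2) * (H * y)\<bar>
      \<le> \<bar>H * y\<^sup>2 / 2\<bar> * \<bar>D 2 t x - H * y\<bar> + \<bar>D 1 t x - H * y\<^sup>2 / 2\<bar> * \<bar>D 2 t x\<bar>"
    by (rule abs_mult_diff_le)
  also have "\<dots> \<le> (Ct_bound * \<bar>y\<bar>\<^sup>2) * (Ct_bound * r * \<bar>y\<bar>) + (Ct_bound * r * \<bar>y\<bar>\<^sup>2) * (Ct_bound * \<bar>y\<bar>)"
    by (intro add_mono mult_mono H2 e2 e1 g2) (simp_all add: r0 bound0)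
  finally show "\<bar>D 1 t x * D 2 t x - (H * y\<^sup>2 / 2) * (H * y)\<bar> \<le> 2 * Ct_bound\<^sup>2 * r * \<bar>y\<bar> ^ 3"
    by (simp add: power2_eq_square power3_eq_cube algebra_simps)
qed

lemma pde_rhs_expansion:
  assumes p: "p \<in> {a, b}"
  shows "\<exists>K. \<forall>t\<in>{0..\<delta>}. \<forall>x\<in>{a..b}. \<bar>pde_rhs t x + (1 + 3 * \<alpha>1) * (D 3 t p)\<^sup>2 * (x - p) ^ 3 / 6\<bar>
    \<le> K * \<bar>x - p\<bar> powr \<alpha> * \<bar>x - p\<bar> ^ 3"
proof (intro exI ballI)
  fix t x assume t: "t \<in> {0..\<delta>}" and x: "x \<in> {a..b}"
  define y where "y = x - p"
  define r where "r = \<bar>x - p\<bar> powr \<alpha>"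
  define H where "H = D 3 t p"
  note P12 = endpoint_product_expansions[OF p t x, folded H_def y_def r_def]
  note P3 = endpoint_nonlinear_term[OF p t x, folded y_def r_def]
  have "pde_rhs t x + (1 + 3 * \<alpha>1) * H\<^sup>2 * y ^ 3 / 6
      = - (f t x * D 3 t x - (H * y ^ 3 / 6) * H)
        - \<alpha>1 * (D 1 t x * D 2 t x - (H * y\<^sup>2 / 2) * (H * y)) - \<mu>1 * (f t x ^ (m - 1) * D 1 t x)"
    unfolding pde_rhs_def by (simp add: power2_eq_square power3_eq_cube algebra_simps)
  then have "\<bar>pde_rhs t x + (1 + 3 * \<alpha>1) * H\<^sup>2 * y ^ 3 / 6\<bar>
      \<le> \<bar>f t x * D 3 t x - (H * y ^ 3 / 6) * H\<bar>
        + \<bar>\<alpha>1\<bar> * \<bar>D 1 t x * D 2 t x - (H * y\<^sup>2 / 2) * (H * y)\<bar> + \<bar>\<mu>1\<bar> * \<bar>f t x ^ (m - 1) * D 1 t x\<bar>"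
    by (simp add: abs_mult[symmetric])
  also have "\<dots> \<le> 2 * Ct_bound\<^sup>2 * r * \<bar>y\<bar> ^ 3 + \<bar>\<alpha>1\<bar> * (2 * Ct_bound\<^sup>2 * r * \<bar>y\<bar> ^ 3)
      + \<bar>\<mu>1\<bar> * (Ct_bound ^ m * (b - a) powr (2 - \<alpha>) * r * \<bar>y\<bar> ^ 3)"
    by (intro add_mono mult_left_mono P12 P3 abs_ge_zero)
  finally show "\<bar>pde_rhs t x + (1 + 3 * \<alpha>1) * (D 3 t p)\<^sup>2 * (x - p) ^ 3 / 6\<bar>
      \<le> (2 * Ct_bound\<^sup>2 + \<bar>\<alpha>1\<bar> * (2 * Ct_bound\<^sup>2) + \<bar>\<mu>1\<bar> * (Ct_bound ^ m * (b - a) powr (2 - \<alpha>)))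
        * \<bar>x - p\<bar> powr \<alpha> * \<bar>x - p\<bar> ^ 3"
    unfolding y_def r_def H_def by (simp add: algebra_simps)
qed

lemma endpoint_difference_quotients:
  assumes p: "p \<in> {a, b}"
  shows "\<exists>K. \<forall>s\<in>{0..\<delta>}. \<forall>x\<in>{a..b}. x \<noteq> p \<longrightarrow>
    \<bar>6 * f s x / (x - p) ^ 3 - D 3 s p\<bar> \<le> K * \<bar>x - p\<bar> powr \<alpha> \<and>
    \<bar>6 * pde_rhs s x / (x - p) ^ 3 - - (1 + 3 * \<alpha>1) * (D 3 s p)\<^sup>2\<bar> \<le> K * \<bar>x - p\<bar> powr \<alpha>"
proof -
  obtain K where K: "\<forall>s\<in>{0..\<delta>}. \<forall>x\<in>{a..b}. \<bar>pde_rhs s x + (1 + 3 * \<alpha>1) * (D 3 s p)\<^sup>2 * (x - p) ^ 3 / 6\<bar>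
      \<le> K * \<bar>x - p\<bar> powr \<alpha> * \<bar>x - p\<bar> ^ 3"
    using pde_rhs_expansion[OF p] by blast
  have "\<bar>6 * f s x / (x - p) ^ 3 - D 3 s p\<bar> \<le> 6 * (\<bar>K\<bar> + L) * \<bar>x - p\<bar> powr \<alpha>
    \<and> \<bar>6 * pde_rhs s x / (x - p) ^ 3 - - (1 + 3 * \<alpha>1) * (D 3 s p)\<^sup>2\<bar> \<le> 6 * (\<bar>K\<bar> + L) * \<bar>x - p\<bar> powr \<alpha>"
    if s: "s \<in> {0..\<delta>}" and x: "x \<in> {a..b}" and xp: "x \<noteq> p" for s x
  proof
    have Y: "(x - p) ^ 3 \<noteq> 0" "\<bar>(x - p) ^ 3\<bar> = \<bar>x - p\<bar> ^ 3" using xp by (simp_all add: power_abs)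
    have "\<bar>6 * f s x / (x - p) ^ 3 - D 3 s p\<bar> \<le> 6 * (L * \<bar>x - p\<bar> powr \<alpha>)"
      using endpoint_expansion(4)[OF p s x order_refl] Y by (intro abs_quotient_diff_le) (simp_all add: mult_ac)
    also have "\<dots> = 6 * L * \<bar>x - p\<bar> powr \<alpha>" by (simp only: mult.assoc)
    also have "\<dots> \<le> 6 * (\<bar>K\<bar> + L) * \<bar>x - p\<bar> powr \<alpha>" by (intro mult_right_mono) auto
    finally show "\<bar>6 * f s x / (x - p) ^ 3 - D 3 s p\<bar> \<le> 6 * (\<bar>K\<bar> + L) * \<bar>x - p\<bar> powr \<alpha>" .
    have "pde_rhs s x - (- (1 + 3 * \<alpha>1) * (D 3 s p)\<^sup>2) * (x - p) ^ 3 / 6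
        = pde_rhs s x + (1 + 3 * \<alpha>1) * (D 3 s p)\<^sup>2 * (x - p) ^ 3 / 6"
      by (simp add: field_simps)
    then have "\<bar>pde_rhs s x - (- (1 + 3 * \<alpha>1) * (D 3 s p)\<^sup>2) * (x - p) ^ 3 / 6\<bar>
        \<le> K * \<bar>x - p\<bar> powr \<alpha> * \<bar>(x - p) ^ 3\<bar>"
      using bspec[OF bspec[OF K s] x] by (simp add: power_abs)
    then have "\<bar>6 * pde_rhs s x / (x - p) ^ 3 - - (1 + 3 * \<alpha>1) * (D 3 s p)\<^sup>2\<bar> \<le> 6 * (K * \<bar>x - p\<bar> powr \<alpha>)"
      by (rule abs_quotient_diff_le[OF Y(1)])
    also have "\<dots> = 6 * K * \<bar>x - p\<bar> powr \<alpha>" by (simp only: mult.assoc)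
    also have "\<dots> \<le> 6 * (\<bar>K\<bar> + L) * \<bar>x - p\<bar> powr \<alpha>"
      using Linf_C_norm_nonneg by (intro mult_right_mono) auto
    finally show "\<bar>6 * pde_rhs s x / (x - p) ^ 3 - - (1 + 3 * \<alpha>1) * (D 3 s p)\<^sup>2\<bar>
        \<le> 6 * (\<bar>K\<bar> + L) * \<bar>x - p\<bar> powr \<alpha>" .
  qed
  then show ?thesis by blast
qed

lemma D3_endpoint_riccati:
  assumes p: "p \<in> {a, b}" and t: "t \<in> {0..\<delta>}"
  shows "((\<lambda>s. D 3 s p) has_real_derivative - (1 + 3 * \<alpha>1) * (D 3 t p)\<^sup>2) (at t within {0..\<delta>})"
proof -
  obtain K where K: "\<forall>s\<in>{0..\<delta>}. \<forall>x\<in>{a..b}. x \<noteq> p \<longrightarrow>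
      \<bar>6 * f s x / (x - p) ^ 3 - D 3 s p\<bar> \<le> K * \<bar>x - p\<bar> powr \<alpha> \<and>
      \<bar>6 * pde_rhs s x / (x - p) ^ 3 - - (1 + 3 * \<alpha>1) * (D 3 s p)\<^sup>2\<bar> \<le> K * \<bar>x - p\<bar> powr \<alpha>"
    using endpoint_difference_quotients[OF p] by blast
  obtain x where x: "\<And>n. x n \<in> {a..b}" and dist: "\<And>n. \<bar>x n - p\<bar> = (b - a) / Suc n"
    using endpoint_approximation[OF sol_params(1) p] by blast
  have xp: "x n \<noteq> p" for n using dist[of n] sol_params(1) by auto
  show ?thesis
  proof (rule has_real_derivative_uniform_limit[where q="\<lambda>n s. 6 * f s (x n) / (x n - p) ^ 3"
        and q'="\<lambda>n s. 6 * pde_rhs s (x n) / (x n - p) ^ 3" and \<rho>="\<lambda>n. K * \<bar>x n - p\<bar> powr \<alpha>"])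
    fix n s assume s: "s \<in> {0..\<delta>}"
    show "((\<lambda>s. 6 * f s (x n) / (x n - p) ^ 3) has_real_derivative 6 * pde_rhs s (x n) / (x n - p) ^ 3)
        (at s within {0..\<delta>})"
      by (intro DERIV_cdivide DERIV_cmult time_deriv s x)
    show "\<bar>6 * f s (x n) / (x n - p) ^ 3 - D 3 s p\<bar> \<le> K * \<bar>x n - p\<bar> powr \<alpha>"
      and "\<bar>6 * pde_rhs s (x n) / (x n - p) ^ 3 - - (1 + 3 * \<alpha>1) * (D 3 s p)\<^sup>2\<bar> \<le> K * \<bar>x n - p\<bar> powr \<alpha>"
      using K s x xp by blast+
  next
    have "(\<lambda>n. (b - a) / Suc n) \<longlonglongrightarrow> 0" by (rule LIMSEQ_Suc[OF lim_const_over_n])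
    then have "(\<lambda>n. \<bar>x n - p\<bar> powr \<alpha>) \<longlonglongrightarrow> 0"
      unfolding dist by (rule tendsto_zero_powrI[OF _ tendsto_const]) (use sol_params(1,2) in auto)
    then show "(\<lambda>n. K * \<bar>x n - p\<bar> powr \<alpha>) \<longlonglongrightarrow> 0"
      using tendsto_mult_right_zero by blast
  qed (use t in simp_all)
qed

end

section \<open>Endpoint behaviour\<close>

lemma endpoint_jet_determined:
  assumes sf: "is_sol \<alpha>1 \<mu>1 m a b \<alpha> \<delta> f" and sg: "is_sol \<alpha>1 \<mu>1 m a b \<alpha> \<delta> g"
    and p: "p \<in> {a, b}" and init: "Dx {a..b} 3 (f 0) p = Dx {a..b} 3 (g 0) p"
    and t: "t \<in> {0..\<delta>}" and k: "k \<le> 3"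
  shows "Dx {a..b} k (f t) p = Dx {a..b} k (g t) p"
proof -
  have "k = 0 \<or> k = 1 \<or> k = 2 \<or> k = 3" using k by arith
  moreover have "Dx {a..b} 3 (f t) p = Dx {a..b} 3 (g t) p"
  proof (rule riccati_unique[OF D3_endpoint_riccati[OF sf p] D3_endpoint_riccati[OF sg p]])
    show "0 \<in> {0..\<delta>}" using sol_params(4)[OF sf] by simp
  qed (use t init in simp_all)
  moreover have "Dx {a..b} 0 (f t) p = Dx {a..b} 0 (g t) p"
    using vanishes_at_endpoint[OF sf p t] vanishes_at_endpoint[OF sg p t] by simp
  moreover have "Dx {a..b} 1 (f t) p = Dx {a..b} 1 (g t) p"
    using D1_vanishes_at_endpoint[OF sf p t] D1_vanishes_at_endpoint[OF sg p t] by simp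
  moreover have "Dx {a..b} 2 (f t) p = Dx {a..b} 2 (g t) p"
    using D2_vanishes_at_endpoint[OF sf p t] D2_vanishes_at_endpoint[OF sg p t] by simp
  ultimately show ?thesis by blast
qed

lemma endpoint_cubic_profile:
  assumes sf: "is_sol \<alpha>1 \<mu>1 m a b \<alpha> \<delta> f" and p: "p \<in> {a, b}"
    and \<beta>: "\<And>t. t \<in> {0..\<delta>} \<Longrightarrow> (\<beta> has_real_derivative - (2 + 6 * \<alpha>1) * \<beta> t ^ 4) (at t within {0..\<delta>})"
    and \<beta>0: "6 * \<beta> 0 ^ 3 = Dx {a..b} 3 (f 0) p"
    and t: "t \<in> {0..\<delta>}" and x: "x \<in> {a..b}"
  shows "\<bar>f t x - (\<beta> t * (x - p)) ^ 3\<bar> \<le> Linf_C_norm 3 \<alpha> {a..b} \<delta> f * \<bar>x - p\<bar> powr (3 + \<alpha>)"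
proof -
  have riccati: "((\<lambda>s. 6 * \<beta> s ^ 3) has_real_derivative - (1 + 3 * \<alpha>1) * (6 * \<beta> s ^ 3)\<^sup>2)
      (at s within {0..\<delta>})" if s: "s \<in> {0..\<delta>}" for s
  proof -
    have "6 * (of_nat 3 * (- (2 + 6 * \<alpha>1) * \<beta> s ^ 4 * \<beta> s ^ (3 - Suc 0)))
        = - (1 + 3 * \<alpha>1) * (6 * \<beta> s ^ 3)\<^sup>2"
      by (simp add: power2_eq_square eval_nat_numeral algebra_simps)
    with DERIV_cmult[OF DERIV_power[OF \<beta>[OF s]], of 6 3] show ?thesis by (simp only:)
  qed
  have "Dx {a..b} 3 (f t) p = 6 * \<beta> t ^ 3"
    using riccati_unique[OF D3_endpoint_riccati[OF sf p] riccati _ _ t, of 0] sol_params(4)[OF sf] \<beta>0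
    by simp
  then have "(\<beta> t * (x - p)) ^ 3 = Dx {a..b} 3 (f t) p * (x - p) ^ 3 / 6"
    by (simp add: power_mult_distrib)
  moreover have "\<bar>x - p\<bar> powr \<alpha> * \<bar>x - p\<bar> ^ 3 = \<bar>x - p\<bar> powr (3 + \<alpha>)"
    by (cases "x = p") (simp_all add: powr_add powr_numeral)
  ultimately show ?thesis
    using endpoint_expansion(4)[OF sf p t x order_refl] by (simp add: mult.assoc)
qed

theorem lemma3p1:
  shows "(\<forall>\<alpha>1 \<mu>1 m a b \<alpha> \<delta> f. is_sol \<alpha>1 \<mu>1 m a b \<alpha> \<delta> f \<longrightarrow>
            (\<forall>t\<in>{0..\<delta>}. f t a = 0 \<and> f t b = 0 \<and> (\<forall>x\<in>{a<..<b}. 0 < f t x)))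
       \<and> (\<forall>\<alpha>1 \<mu>1 m a b \<alpha> \<delta> f g. is_sol \<alpha>1 \<mu>1 m a b \<alpha> \<delta> f \<and> is_sol \<alpha>1 \<mu>1 m a b \<alpha> \<delta> g \<and>
            (\<forall>k\<le>3. Dx {a..b} k (f 0) a = Dx {a..b} k (g 0) a) \<longrightarrow>
            (\<forall>t\<in>{0..\<delta>}. \<forall>k\<le>3. Dx {a..b} k (f t) a = Dx {a..b} k (g t) a))
       \<and> (\<forall>\<alpha>1 \<mu>1 m a b \<alpha> \<delta> f g. is_sol \<alpha>1 \<mu>1 m a b \<alpha> \<delta> f \<and> is_sol \<alpha>1 \<mu>1 m a b \<alpha> \<delta> g \<and>
            (\<forall>k\<le>3. Dx {a..b} k (f 0) b = Dx {a..b} k (g 0) b) \<longrightarrow>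
            (\<forall>t\<in>{0..\<delta>}. \<forall>k\<le>3. Dx {a..b} k (f t) b = Dx {a..b} k (g t) b))
       \<and> (\<exists>C::real. \<forall>\<alpha>1 \<mu>1 m a b \<alpha> \<delta> f.
            is_sol \<alpha>1 \<mu>1 m a b \<alpha> \<delta> f \<longrightarrow>
            (\<forall>\<beta>. (\<forall>t\<in>{0..\<delta>}. (\<beta> has_real_derivative (- (2 + 6 * \<alpha>1) * \<beta> t ^ 4)) (at t within {0..\<delta>}))
                 \<and> 6 * \<beta> 0 ^ 3 = Dx {a..b} 3 (f 0) a \<longrightarrow>
                 (\<forall>t\<in>{0..\<delta>}. \<forall>\<^sub>F x in at_right a.
                    \<bar>f t x - (\<beta> t * (x - a)) ^ 3\<bar>
                      \<le> C * Linf_C_norm 3 \<alpha> {a..b} \<delta> f * \<bar>x - a\<bar> powr (3 + \<alpha>))) \<and>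
            (\<forall>\<beta>. (\<forall>t\<in>{0..\<delta>}. (\<beta> has_real_derivative (- (2 + 6 * \<alpha>1) * \<beta> t ^ 4)) (at t within {0..\<delta>}))
                 \<and> 6 * \<beta> 0 ^ 3 = Dx {a..b} 3 (f 0) b \<longrightarrow>
                 (\<forall>t\<in>{0..\<delta>}. \<forall>\<^sub>F x in at_left b.
                    \<bar>f t x - (\<beta> t * (x - b)) ^ 3\<bar>
                      \<le> C * Linf_C_norm 3 \<alpha> {a..b} \<delta> f * \<bar>x - b\<bar> powr (3 + \<alpha>))))"
proof (intro conjI allI impI ballI exI[of _ 1])
  fix \<alpha>1 \<mu>1 m a b \<alpha> \<delta> f t
  assume sf: "is_sol \<alpha>1 \<mu>1 m a b \<alpha> \<delta> f" and t: "t \<in> {0..\<delta>}"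
  show "f t a = 0" "f t b = 0" using vanishes_at_endpoint[OF sf _ t] by simp_all
  show "0 < f t x" if "x \<in> {a<..<b}" for x using positive_inside[OF sf t that] .
next
  fix \<alpha>1 \<mu>1 m a b \<alpha> \<delta> f g t and k :: nat
  assume "is_sol \<alpha>1 \<mu>1 m a b \<alpha> \<delta> f \<and> is_sol \<alpha>1 \<mu>1 m a b \<alpha> \<delta> g \<and>
    (\<forall>k\<le>3. Dx {a..b} k (f 0) a = Dx {a..b} k (g 0) a)" "t \<in> {0..\<delta>}" "k \<le> 3"
  then show "Dx {a..b} k (f t) a = Dx {a..b} k (g t) a"
    using endpoint_jet_determined[of \<alpha>1 \<mu>1 m a b \<alpha> \<delta> f g a] by simp
next
  fix \<alpha>1 \<mu>1 m a b \<alpha> \<delta> f g t and k :: nat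
  assume "is_sol \<alpha>1 \<mu>1 m a b \<alpha> \<delta> f \<and> is_sol \<alpha>1 \<mu>1 m a b \<alpha> \<delta> g \<and>
    (\<forall>k\<le>3. Dx {a..b} k (f 0) b = Dx {a..b} k (g 0) b)" "t \<in> {0..\<delta>}" "k \<le> 3"
  then show "Dx {a..b} k (f t) b = Dx {a..b} k (g t) b"
    using endpoint_jet_determined[of \<alpha>1 \<mu>1 m a b \<alpha> \<delta> f g b] by simp
next
  fix \<alpha>1 \<mu>1 m a b \<alpha> \<delta> f \<beta> t
  assume sf: "is_sol \<alpha>1 \<mu>1 m a b \<alpha> \<delta> f" and t: "t \<in> {0..\<delta>}"
  have ab: "a < b" using sol_params(1)[OF sf] .
  {
    assume \<beta>: "(\<forall>t\<in>{0..\<delta>}. (\<beta> has_real_derivative (- (2 + 6 * \<alpha>1) * \<beta> t ^ 4)) (at t within {0..\<delta>}))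
      \<and> 6 * \<beta> 0 ^ 3 = Dx {a..b} 3 (f 0) a"
    have "\<bar>f t x - (\<beta> t * (x - a)) ^ 3\<bar> \<le> Linf_C_norm 3 \<alpha> {a..b} \<delta> f * \<bar>x - a\<bar> powr (3 + \<alpha>)"
      if "x \<in> {a<..<b}" for x
      using \<beta> that by (intro endpoint_cubic_profile[OF sf _ _ _ t]) auto
    with eventually_at_right_real[OF ab]
    show "\<forall>\<^sub>F x in at_right a. \<bar>f t x - (\<beta> t * (x - a)) ^ 3\<bar>
        \<le> 1 * Linf_C_norm 3 \<alpha> {a..b} \<delta> f * \<bar>x - a\<bar> powr (3 + \<alpha>)"
      by (auto elim: eventually_mono)
  }
  {
    assume \<beta>: "(\<forall>t\<in>{0..\<delta>}. (\<beta> has_real_derivative (- (2 + 6 * \<alpha>1) * \<beta> t ^ 4)) (at t within {0..\<delta>}))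
      \<and> 6 * \<beta> 0 ^ 3 = Dx {a..b} 3 (f 0) b"
    have "\<bar>f t x - (\<beta> t * (x - b)) ^ 3\<bar> \<le> Linf_C_norm 3 \<alpha> {a..b} \<delta> f * \<bar>x - b\<bar> powr (3 + \<alpha>)"
      if "x \<in> {a<..<b}" for x
      using \<beta> that by (intro endpoint_cubic_profile[OF sf _ _ _ t]) auto
    with eventually_at_left_real[OF ab]
    show "\<forall>\<^sub>F x in at_left b. \<bar>f t x - (\<beta> t * (x - b)) ^ 3\<bar>
        \<le> 1 * Linf_C_norm 3 \<alpha> {a..b} \<delta> f * \<bar>x - b\<bar> powr (3 + \<alpha>)"
      by (auto elim: eventually_mono)
  }
qed

end
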